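(* Let $G$ be a cactus whose cycles are $C^1_{n_1},\dots,C^m_{n_m}$, with $m\ge 1$ (here $C^i_{n_i}$ is a cycle with $n_i$ vertices). Then $$\mathrm{vol}(G)=\prod_{i=1}^m \mathrm{vol}(C^i_{n_i}).$$
   Context: A cactus is a connected finite simple graph in which every edge lies in at most one cycle. For a finite simple undirected graph $G=(V,E)$ with $V=[n]$, and $S\subseteq[n-1]$, the cut vector $x^S\in\mathbb{R}^{|E|}$ has coordinates $x^S_{ij}=1$ if $|\{i,j\}\cap S|=1$ and $x^S_{ij}=0$ otherwise, for each edge $(i,j)\in E$. The cut polytope is $\mathrm{Cut}(G)=\mathrm{conv}\{x^S: S\subseteq[n-1]\}\subset\mathbb{R}^{|E|}$, and $\mathrm{vol}(G)$ denotes the $|E|$-dimensional Lebesgue volume of $\mathrm{Cut}(G)$ (for a cycle $C$ regarded as a graph, $\mathrm{vol}(C)$ is the volume of the cut polytope of that cycle). *)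

theory Defs
  imports "HOL-Analysis.Analysis" "HOL-Probability.Probability"
begin

definition simple_graph :: "nat \<Rightarrow> nat set set \<Rightarrow> bool" where
  "simple_graph n E \<longleftrightarrow> n \<ge> 1 \<and>
     (\<forall>e\<in>E. \<exists>i j. e = {i, j} \<and> i \<noteq> j \<and> i \<in> {1..n} \<and> j \<in> {1..n})"

definition adj :: "nat set set \<Rightarrow> nat \<Rightarrow> nat \<Rightarrow> bool" where
  "adj E u v \<longleftrightarrow> {u, v} \<in> E"

definition connected_graph :: "nat \<Rightarrow> nat set set \<Rightarrow> bool" where
  "connected_graph n E \<longleftrightarrow> (\<forall>u\<in>{1..n}. \<forall>v\<in>{1..n}. (adj E)\<^sup>*\<^sup>* u v)"

definition cycle_of :: "nat list \<Rightarrow> nat set set" where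
  "cycle_of vs = {{vs ! i, vs ! ((i + 1) mod length vs)} | i. i < length vs}"

definition is_cycle :: "nat set set \<Rightarrow> nat set set \<Rightarrow> bool" where
  "is_cycle E C \<longleftrightarrow> (\<exists>vs. length vs \<ge> 3 \<and> distinct vs \<and> C = cycle_of vs \<and> C \<subseteq> E)"

definition cycles :: "nat set set \<Rightarrow> nat set set set" where
  "cycles E = {C. is_cycle E C}"

definition cactus :: "nat \<Rightarrow> nat set set \<Rightarrow> bool" where
  "cactus n E \<longleftrightarrow> simple_graph n E \<and> connected_graph n E \<and>
     (\<forall>e\<in>E. \<forall>C1 C2. is_cycle E C1 \<and> is_cycle E C2 \<and> e \<in> C1 \<and> e \<in> C2 \<longrightarrow> C1 = C2)"

definition cut_vec :: "nat set set \<Rightarrow> nat set \<Rightarrow> nat set \<Rightarrow> real" where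
  "cut_vec E S = (\<lambda>e\<in>E. if card (e \<inter> S) = 1 then 1 else 0)"

(* Cut(G) = conv{x^S : S \<subseteq> [n-1]}, written out as the set of convex combinations *)
definition cut_polytope :: "nat \<Rightarrow> nat set set \<Rightarrow> (nat set \<Rightarrow> real) set" where
  "cut_polytope n E = {x. \<exists>c :: nat set \<Rightarrow> real. (\<forall>S. 0 \<le> c S) \<and>
       (\<Sum>S\<in>Pow {1..n-1}. c S) = 1 \<and>
       x = (\<lambda>e\<in>E. \<Sum>S\<in>Pow {1..n-1}. c S * cut_vec E S e)}"

definition cut_vol :: "nat \<Rightarrow> nat set set \<Rightarrow> real" where
  "cut_vol n E = measure (PiM E (\<lambda>_. lborel)) (cut_polytope n E)"

definition cycle_graph :: "nat \<Rightarrow> nat set set" where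
  "cycle_graph k = {{i, i + 1} | i. 1 \<le> i \<and> i < k} \<union> {{k, 1}}"

end

theory Submission
  imports Defs
begin

text \<open>A 0/1 vector on the edges is a cut vector exactly when it has an even number of ones
  on every cycle: a cut meets every cycle evenly, and conversely a vector with this property
  can be realised edge by edge, complementing the cut on a connected component whenever a
  new edge that closes no cycle comes out wrong (the component avoids vertex n, which must stay
  outside the cut). Since every edge of a cactus lies in at most one cycle, the cycles and the
  bridges partition the edges, and the parity conditions decouple: the set of cut vectors is
  the product, over these blocks, of the even 0/1 vectors on each cycle and of {0,1} on each
  bridge. Convex hulls and Lebesgue measure both factor over such a product. A bridge
  contributes the unit interval, and a cycle with k edges contributes, after relabelling its
  edges, the volume of the cut polytope of the standard k-cycle.\<close>

section \<open>Cuts and cycles\<close>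

definition cycle_edge :: "nat list \<Rightarrow> nat \<Rightarrow> nat set" where
  "cycle_edge vs i = {vs ! i, vs ! ((i + 1) mod length vs)}"

lemma cycle_of_eq_image: "cycle_of vs = cycle_edge vs ` {..<length vs}"
  unfolding cycle_of_def cycle_edge_def by auto

lemma nth_Suc_mod_neq:
  assumes "distinct vs" "2 \<le> length vs" "i < length vs"
  shows "vs ! i \<noteq> vs ! ((i + 1) mod length vs)"
proof -
  have "(i + 1) mod length vs \<noteq> i"
    using assms(2,3) by (cases "i + 1 = length vs") auto
  moreover have "(i + 1) mod length vs < length vs"
    using assms(3) by (intro mod_less_divisor) auto
  ultimately show ?thesis
    using assms nth_eq_iff_index_eq[OF assms(1), of i "(i + 1) mod length vs"] by simp
qed

lemma bij_betw_cycle_edge: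
  assumes "distinct vs" "3 \<le> length vs"
  shows "bij_betw (cycle_edge vs) {..<length vs} (cycle_of vs)"
proof -
  let ?L = "length vs"
  have succ: "(i + 1) mod ?L < ?L" for i
    using assms(2) by (intro mod_less_divisor) auto
  have nth_inj: "vs ! i = vs ! j \<longleftrightarrow> i = j" if "i < ?L" "j < ?L" for i j
    using assms(1) that nth_eq_iff_index_eq by blast
  have "inj_on (cycle_edge vs) {..<?L}"
  proof
    fix i j assume i: "i \<in> {..<?L}" and j: "j \<in> {..<?L}" and eq: "cycle_edge vs i = cycle_edge vs j"
    show "i = j"
    proof (rule ccontr)
      assume ne: "i \<noteq> j"
      from eq have "i = (j + 1) mod ?L" "j = (i + 1) mod ?L"
        unfolding cycle_edge_def doubleton_eq_iff using ne i j nth_inj succ by auto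
      then have "i = (i + 2) mod ?L" by (simp add: mod_Suc_eq)
      then show False
        using i assms(2) by (cases "i + 2 < ?L") (auto simp: le_mod_geq)
    qed
  qed
  then show ?thesis unfolding bij_betw_def cycle_of_eq_image by simp
qed

lemma card_doubleton_Int_eq_1:
  assumes "p \<noteq> q"
  shows "card ({p, q} \<inter> S) = 1 \<longleftrightarrow> (p \<in> S) \<noteq> (q \<in> S)"
  using assms by (cases "p \<in> S"; cases "q \<in> S") (auto simp: Int_insert_left)

lemma even_card_changes_iff:
  fixes a :: "nat \<Rightarrow> bool"
  shows "even (card {i. i < m \<and> a i \<noteq> a (Suc i)}) \<longleftrightarrow> a 0 = a m"
proof (induction m)
  case 0 then show ?case by simp
next
  case (Suc m)
  have "{i. i < Suc m \<and> a i \<noteq> a (Suc i)} =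
      {i. i < m \<and> a i \<noteq> a (Suc i)} \<union> (if a m \<noteq> a (Suc m) then {m} else {})"
    by (auto simp: less_Suc_eq)
  then have "card {i. i < Suc m \<and> a i \<noteq> a (Suc i)} =
      card {i. i < m \<and> a i \<noteq> a (Suc i)} + (if a m \<noteq> a (Suc m) then 1 else 0)"
    by (auto simp: card_insert_if)
  then show ?case
    using Suc.IH by (cases "a m"; cases "a 0"; cases "a (Suc m)") auto
qed

lemma even_card_cyclic_changes:
  fixes a :: "nat \<Rightarrow> bool"
  assumes "L \<ge> 1"
  shows "even (card {i. i < L \<and> a i \<noteq> a ((i + 1) mod L)})"
proof -
  obtain m where m: "L = Suc m" using assms by (cases L) auto
  have "{i. i < L \<and> a i \<noteq> a ((i + 1) mod L)} =
      {i. i < m \<and> a i \<noteq> a (Suc i)} \<union> (if a m \<noteq> a 0 then {m} else {})"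
  proof -
    have "Suc i mod Suc m = Suc i" if "i < m" for i using that by simp
    then show ?thesis using m by (auto simp: less_Suc_eq)
  qed
  then have "card {i. i < L \<and> a i \<noteq> a ((i + 1) mod L)} =
      card {i. i < m \<and> a i \<noteq> a (Suc i)} + (if a m \<noteq> a 0 then 1 else 0)"
    by (auto simp: card_insert_if)
  then show ?thesis
    using even_card_changes_iff[of m a] by (cases "a m"; cases "a 0") auto
qed

lemma even_card_cut_edges_cycle_of:
  assumes "distinct vs" "3 \<le> length vs"
  shows "even (card {e \<in> cycle_of vs. card (e \<inter> S) = 1})"
proof -
  let ?L = "length vs"
  have "{e \<in> cycle_of vs. card (e \<inter> S) = 1} =
      cycle_edge vs ` {i. i < ?L \<and> card (cycle_edge vs i \<inter> S) = 1}"
    unfolding cycle_of_eq_image by auto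
  also have "card \<dots> = card {i. i < ?L \<and> card (cycle_edge vs i \<inter> S) = 1}"
    using bij_betw_imp_inj_on[OF bij_betw_cycle_edge[OF assms]]
    by (intro card_image) (auto intro: inj_on_subset)
  also have "{i. i < ?L \<and> card (cycle_edge vs i \<inter> S) = 1} =
      {i. i < ?L \<and> (vs ! i \<in> S) \<noteq> (vs ! ((i + 1) mod ?L) \<in> S)}"
  proof (intro Collect_cong conj_cong refl)
    fix i assume "i < ?L"
    then have "vs ! i \<noteq> vs ! ((i + 1) mod ?L)" using nth_Suc_mod_neq[OF assms(1)] assms(2) by simp
    then show "card (cycle_edge vs i \<inter> S) = 1 \<longleftrightarrow> (vs ! i \<in> S) \<noteq> (vs ! ((i + 1) mod ?L) \<in> S)"
      unfolding cycle_edge_def by (rule card_doubleton_Int_eq_1)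
  qed
  finally show ?thesis
    using even_card_cyclic_changes[of ?L "\<lambda>i. vs ! i \<in> S"] assms(2) by simp
qed

lemma even_cut_vec_support:
  assumes "is_cycle E C"
  shows "even (card {e \<in> C. cut_vec E S e = 1})"
proof -
  obtain vs where vs: "3 \<le> length vs" "distinct vs" "C = cycle_of vs" "C \<subseteq> E"
    using assms unfolding is_cycle_def by auto
  then have "{e \<in> C. cut_vec E S e = 1} = {e \<in> cycle_of vs. card (e \<inter> S) = 1}"
    by (auto simp: cut_vec_def)
  then show ?thesis using even_card_cut_edges_cycle_of[OF vs(2,1)] by simp
qed

lemma adj_rtranclp_sym: "(adj F)\<^sup>*\<^sup>* a b \<Longrightarrow> (adj F)\<^sup>*\<^sup>* b a"
proof -
  have "symp (adj F)" unfolding adj_def by (auto intro!: sympI simp: insert_commute)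
  then show "(adj F)\<^sup>*\<^sup>* a b \<Longrightarrow> (adj F)\<^sup>*\<^sup>* b a" by (metis symp_rtranclp sympD)
qed

lemma adj_rtranclp_disconnected_endpoint:
  assumes "\<not> (adj F)\<^sup>*\<^sup>* u v"
  shows "\<not> (adj F)\<^sup>*\<^sup>* u w \<or> \<not> (adj F)\<^sup>*\<^sup>* v w"
  using assms adj_rtranclp_sym rtranclp_trans by metis

lemma adj_rtranclp_endpoint: "(adj F)\<^sup>*\<^sup>* a w \<Longrightarrow> w = a \<or> (\<exists>f\<in>F. w \<in> f)"
  by (induction rule: rtranclp_induct) (auto simp: adj_def)

lemma adj_rtranclp_imp_path:
  assumes "(adj F)\<^sup>*\<^sup>* u v"
  obtains ws where "ws \<noteq> []" "distinct ws" "hd ws = u" "last ws = v"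
    "\<And>i. Suc i < length ws \<Longrightarrow> {ws ! i, ws ! Suc i} \<in> F"
proof -
  from assms have "\<exists>ws. ws \<noteq> [] \<and> distinct ws \<and> hd ws = u \<and> last ws = v \<and>
      (\<forall>i. Suc i < length ws \<longrightarrow> {ws ! i, ws ! Suc i} \<in> F)"
  proof (induction rule: rtranclp_induct)
    case base
    show ?case by (intro exI[of _ "[u]"]) auto
  next
    case (step y z)
    then obtain ws where ws: "ws \<noteq> []" "distinct ws" "hd ws = u" "last ws = y"
      "\<forall>i. Suc i < length ws \<longrightarrow> {ws ! i, ws ! Suc i} \<in> F" by blast
    have yz: "{y, z} \<in> F" using step(2) by (simp add: adj_def)
    show ?case
    proof (cases "z \<in> set ws")
      case True
      then obtain j where j: "j < length ws" "ws ! j = z" by (meson in_set_conv_nth)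
      have "hd (take (Suc j) ws) = u" using ws(1,3) by (simp add: hd_take)
      moreover have "last (take (Suc j) ws) = z" using j by (simp add: take_Suc_conv_app_nth)
      ultimately show ?thesis
        using ws(1,2,5) by (intro exI[of _ "take (Suc j) ws"]) auto
    next
      case False
      have "{(ws @ [z]) ! i, (ws @ [z]) ! Suc i} \<in> F" if "Suc i < length (ws @ [z])" for i
      proof (cases "Suc i < length ws")
        case True then show ?thesis using ws(5) by (simp add: nth_append)
      next
        case False
        then have "i = length ws - 1" using that by simp
        then show ?thesis using ws(1,4) yz by (simp add: nth_append last_conv_nth)
      qed
      then show ?thesis using ws False by (intro exI[of _ "ws @ [z]"]) auto
    qed
  qed
  then show ?thesis using that by blast
qed

lemma cycle_through_new_edge:
  assumes "(adj F)\<^sup>*\<^sup>* u v" "u \<noteq> v" "{u, v} \<notin> F"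
  obtains C where "is_cycle (insert {u, v} F) C" "{u, v} \<in> C"
proof -
  obtain ws where ws: "ws \<noteq> []" "distinct ws" "hd ws = u" "last ws = v"
    and path: "\<And>i. Suc i < length ws \<Longrightarrow> {ws ! i, ws ! Suc i} \<in> F"
    using adj_rtranclp_imp_path[OF assms(1)] by blast
  let ?L = "length ws"
  have ends: "ws ! 0 = u" "ws ! (?L - 1) = v"
    using ws by (auto simp: hd_conv_nth last_conv_nth)
  have "?L \<noteq> 1" using ends assms(2) by auto
  moreover have "?L \<noteq> 2" using path[of 0] ends assms(3) by auto
  ultimately have L: "3 \<le> ?L" using ws(1) by (cases ?L) auto
  have "?L - 1 + 1 = ?L" using L by simp
  then have "(?L - 1 + 1) mod ?L = 0" by (metis mod_self)
  then have closing: "cycle_edge ws (?L - 1) = {u, v}"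
    using ends unfolding cycle_edge_def by (simp add: insert_commute)
  have "cycle_of ws \<subseteq> insert {u, v} F"
  proof
    fix e assume "e \<in> cycle_of ws"
    then obtain i where i: "i < ?L" "e = cycle_edge ws i" unfolding cycle_of_eq_image by auto
    show "e \<in> insert {u, v} F"
    proof (cases "Suc i < ?L")
      case True then show ?thesis using path i by (simp add: cycle_edge_def)
    next
      case False
      then have "i = ?L - 1" using i by simp
      then show ?thesis using closing i by simp
    qed
  qed
  moreover have "{u, v} \<in> cycle_of ws"
    using closing L unfolding cycle_of_eq_image by (intro image_eqI[of _ _ "?L - 1"]) auto
  ultimately show ?thesis
    using that ws(2) L unfolding is_cycle_def by blast
qed

definition binary_vectors :: "'i set \<Rightarrow> ('i \<Rightarrow> real) set" where
  "binary_vectors X = {y \<in> extensional X. \<forall>e\<in>X. y e = 0 \<or> y e = 1}"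

definition even_vectors :: "'i set \<Rightarrow> ('i \<Rightarrow> real) set" where
  "even_vectors X = {y \<in> binary_vectors X. even (card {e \<in> X. y e = 1})}"

lemma even_support_flip:
  fixes x y :: "'i \<Rightarrow> real"
  assumes "finite C" "e \<in> C" "\<forall>f\<in>C. f \<noteq> e \<longrightarrow> x f = y f" "x e \<noteq> y e"
    "x e = 0 \<or> x e = 1" "y e = 0 \<or> y e = 1"
  shows "even (card {f \<in> C. x f = 1}) \<longleftrightarrow> odd (card {f \<in> C. y f = 1})"
proof -
  define A where "A = {f \<in> C. f \<noteq> e \<and> x f = 1}"
  have A: "finite A" "e \<notin> A" using assms(1) by (auto simp: A_def)
  have "{f \<in> C. x f = 1} = (if x e = 1 then insert e A else A)"
    using assms(2) by (auto simp: A_def)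
  moreover have "{f \<in> C. y f = 1} = (if y e = 1 then insert e A else A)"
    using assms(2,3) by (auto simp: A_def)
  ultimately show ?thesis using assms(4-6) A by auto
qed

lemma finite_edges: "simple_graph n E \<Longrightarrow> finite E"
  unfolding simple_graph_def by (rule finite_subset[of E "Pow {1..n}"]) auto

text \<open>The new cut is the symmetric difference of \<open>S'\<close> with the connected component
  of the endpoint not connected to \<open>n\<close>: this toggles exactly the edges leaving that
  component, which include \<open>{u, v}\<close> and no edge of \<open>F\<close>.\<close>

lemma toggle_cut_on_component:
  assumes G: "simple_graph n F" and uv: "u \<in> {1..n}" "v \<in> {1..n}" "u \<noteq> v"
    and not_conn: "\<not> (adj F)\<^sup>*\<^sup>* u v" and S': "S' \<subseteq> {1..n-1}"
  obtains S where "S \<subseteq> {1..n-1}" "\<forall>f\<in>F. card (f \<inter> S) = 1 \<longleftrightarrow> card (f \<inter> S') = 1"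
    "card ({u, v} \<inter> S) = 1 \<longleftrightarrow> card ({u, v} \<inter> S') \<noteq> 1"
proof -
  obtain a b where ab: "{a, b} = {u, v}" "a \<in> {1..n}" "a \<noteq> b"
    "\<not> (adj F)\<^sup>*\<^sup>* a b" "\<not> (adj F)\<^sup>*\<^sup>* a n"
    using adj_rtranclp_disconnected_endpoint[OF not_conn, of n] adj_rtranclp_sym not_conn uv
    by (metis insert_commute)
  define R where "R = {w. (adj F)\<^sup>*\<^sup>* a w}"
  define S where "S = {w. (w \<in> S') \<noteq> (w \<in> R)}"
  have aR: "a \<in> R" "b \<notin> R" "n \<notin> R" using ab by (auto simp: R_def)
  have "R \<subseteq> {1..n}"
    using adj_rtranclp_endpoint[of F a] ab(2) G unfolding R_def simple_graph_def by fastforce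
  have "R \<subseteq> {1..n-1}"
  proof
    fix w assume "w \<in> R"
    then have "w \<in> {1..n}" "w \<noteq> n" using \<open>R \<subseteq> {1..n}\<close> aR(3) by auto
    then show "w \<in> {1..n-1}" by auto
  qed
  moreover have "S \<subseteq> S' \<union> R" by (auto simp: S_def)
  ultimately have "S \<subseteq> {1..n-1}" using S' by blast
  moreover have "\<forall>f\<in>F. card (f \<inter> S) = 1 \<longleftrightarrow> card (f \<inter> S') = 1"
  proof
    fix f assume f: "f \<in> F"
    then obtain p q where pq: "f = {p, q}" "p \<noteq> q" using G by (auto simp: simple_graph_def)
    then have "adj F p q" "adj F q p" using f by (auto simp: adj_def insert_commute)
    then have "p \<in> R \<longleftrightarrow> q \<in> R" unfolding R_def mem_Collect_eq
      by (meson rtranclp.rtrancl_into_rtrancl)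
    then show "card (f \<inter> S) = 1 \<longleftrightarrow> card (f \<inter> S') = 1"
      unfolding pq card_doubleton_Int_eq_1[OF pq(2)] by (auto simp: S_def)
  qed
  moreover have "card ({a, b} \<inter> S) = 1 \<longleftrightarrow> card ({a, b} \<inter> S') \<noteq> 1"
    unfolding card_doubleton_Int_eq_1[OF ab(3)] using aR by (auto simp: S_def)
  ultimately show ?thesis using that ab(1) by metis
qed

lemma even_on_cycles_restrict:
  assumes "F \<subseteq> E" "\<forall>C. is_cycle E C \<longrightarrow> even (card {e \<in> C. x e = 1})"
  shows "\<forall>C. is_cycle F C \<longrightarrow> even (card {e \<in> C. restrict x F e = 1})"
proof (intro allI impI)
  fix C assume C: "is_cycle F C"
  then have "is_cycle E C" "C \<subseteq> F" using assms(1) unfolding is_cycle_def by auto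
  moreover have "{e \<in> C. restrict x F e = 1} = {e \<in> C. x e = 1}" using \<open>C \<subseteq> F\<close> by auto
  ultimately show "even (card {e \<in> C. restrict x F e = 1})" using assms(2) by simp
qed

lemma cut_vec_in_binary_vectors: "cut_vec E S \<in> binary_vectors E"
  by (simp add: cut_vec_def binary_vectors_def)

lemma flip_on_new_edge_imp_not_connected:
  fixes x y :: "nat set \<Rightarrow> real"
  assumes "finite F" "u \<noteq> v" "{u, v} \<notin> F"
    and "x \<in> binary_vectors (insert {u, v} F)" "y \<in> binary_vectors (insert {u, v} F)"
    and "\<forall>f\<in>F. x f = y f" "x {u, v} \<noteq> y {u, v}"
    and "\<forall>C. is_cycle (insert {u, v} F) C \<longrightarrow> even (card {f \<in> C. x f = 1})"
    and "\<forall>C. is_cycle (insert {u, v} F) C \<longrightarrow> even (card {f \<in> C. y f = 1})"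
  shows "\<not> (adj F)\<^sup>*\<^sup>* u v"
proof
  assume "(adj F)\<^sup>*\<^sup>* u v"
  then obtain C where C: "is_cycle (insert {u, v} F) C" "{u, v} \<in> C"
    using cycle_through_new_edge assms(2,3) by metis
  have "C \<subseteq> insert {u, v} F" using C(1) unfolding is_cycle_def by blast
  then have "finite C" "\<forall>f\<in>C. f \<noteq> {u, v} \<longrightarrow> x f = y f"
    using assms(1,6) finite_subset by auto
  moreover have "x {u, v} = 0 \<or> x {u, v} = 1" "y {u, v} = 0 \<or> y {u, v} = 1"
    using assms(4,5) by (auto simp: binary_vectors_def)
  ultimately have "even (card {f \<in> C. x f = 1}) \<longleftrightarrow> odd (card {f \<in> C. y f = 1})"
    using even_support_flip[of C "{u, v}" x y] C(2) assms(7) by auto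
  then show False using assms(8,9) C(1) by blast
qed

lemma even_on_cycles_imp_cut_vec:
  assumes "finite E" "simple_graph n E" "x \<in> binary_vectors E"
    "\<forall>C. is_cycle E C \<longrightarrow> even (card {e \<in> C. x e = 1})"
  shows "\<exists>S \<subseteq> {1..n-1}. cut_vec E S = x"
  using assms
proof (induction E arbitrary: x rule: finite_induct)
  case empty
  then show ?case by (intro exI[of _ "{}"]) (auto simp: cut_vec_def binary_vectors_def)
next
  case (insert e F)
  have G: "simple_graph n F" using insert.prems(1) by (simp add: simple_graph_def)
  have "restrict x F \<in> binary_vectors F" using insert.prems(2) by (auto simp: binary_vectors_def)
  moreover have "\<forall>C. is_cycle F C \<longrightarrow> even (card {f \<in> C. restrict x F f = 1})"
    using even_on_cycles_restrict[of F "insert e F"] insert.prems(3) by blast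
  ultimately obtain S' where S': "S' \<subseteq> {1..n-1}" "cut_vec F S' = restrict x F"
    using insert.IH[OF G] by blast
  let ?y = "cut_vec (insert e F) S'"
  have agree: "\<forall>f\<in>F. ?y f = x f"
  proof
    fix f assume "f \<in> F"
    then have "?y f = cut_vec F S' f" by (simp add: cut_vec_def)
    also have "\<dots> = x f" using S'(2) \<open>f \<in> F\<close> by (metis restrict_apply')
    finally show "?y f = x f" .
  qed
  have x_eqI: "cut_vec (insert e F) S = x" if "cut_vec (insert e F) S e = x e"
    and "\<forall>f\<in>F. cut_vec (insert e F) S f = x f" for S
    using that insert.prems(2)
      by (auto simp: fun_eq_iff cut_vec_def binary_vectors_def extensional_def)
  show ?case
  proof (cases "?y e = x e")
    case True
    then show ?thesis using S'(1) agree x_eqI by blast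
  next
    case flipped: False
    obtain u v where uv: "e = {u, v}" "u \<noteq> v" "u \<in> {1..n}" "v \<in> {1..n}"
      using insert.prems(1) by (auto simp: simple_graph_def)
    have "\<not> (adj F)\<^sup>*\<^sup>* u v"
      using flip_on_new_edge_imp_not_connected[of F u v x ?y] insert uv(1,2) flipped agree
        cut_vec_in_binary_vectors even_cut_vec_support by auto
    then obtain S where S: "S \<subseteq> {1..n-1}" "\<forall>f\<in>F. card (f \<inter> S) = 1 \<longleftrightarrow> card (f \<inter> S') = 1"
      "card (e \<inter> S) = 1 \<longleftrightarrow> card (e \<inter> S') \<noteq> 1"
      using toggle_cut_on_component[OF G uv(3,4,2) _ S'(1)] uv(1) by metis
    have "cut_vec (insert e F) S e = x e"
      using S(3) flipped insert.prems(2) by (auto simp: cut_vec_def binary_vectors_def)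
    moreover have "\<forall>f\<in>F. cut_vec (insert e F) S f = x f"
      using S(2) agree by (simp add: cut_vec_def)
    ultimately show ?thesis using S(1) x_eqI by blast
  qed
qed

lemma cut_vectors_eq_even_on_cycles:
  assumes "simple_graph n E"
  shows "cut_vec E ` Pow {1..n-1} =
    {x \<in> binary_vectors E. \<forall>C. is_cycle E C \<longrightarrow> even (card {e \<in> C. x e = 1})}"
  using even_on_cycles_imp_cut_vec[OF finite_edges[OF assms] assms]
    cut_vec_in_binary_vectors even_cut_vec_support by blast

section \<open>Convex combinations over blocks of coordinates\<close>

definition convex_combs :: "'i set \<Rightarrow> ('i \<Rightarrow> real) set \<Rightarrow> ('i \<Rightarrow> real) set" where
  "convex_combs I W =
    {x. \<exists>c. (\<forall>w. 0 \<le> c w) \<and> (\<Sum>w\<in>W. c w) = 1 \<and> x = (\<lambda>i\<in>I. \<Sum>w\<in>W. c w * w i)}"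

lemma convex_combs_subset_extensional: "convex_combs I W \<subseteq> extensional I"
  unfolding convex_combs_def by auto

lemma convex_combs_image:
  fixes f :: "'a \<Rightarrow> 'i \<Rightarrow> real"
  assumes A: "finite A"
  shows "{x. \<exists>c. (\<forall>a. 0 \<le> c a) \<and> (\<Sum>a\<in>A. c a) = 1 \<and> x = (\<lambda>i\<in>I. \<Sum>a\<in>A. c a * f a i)} =
    convex_combs I (f ` A)"
proof (intro equalityI subsetI)
  fix x assume "x \<in> {x. \<exists>c. (\<forall>a. 0 \<le> c a) \<and> (\<Sum>a\<in>A. c a) = 1 \<and> x = (\<lambda>i\<in>I. \<Sum>a\<in>A. c a * f a i)}"
  then obtain c where c: "\<forall>a. 0 \<le> c a" "(\<Sum>a\<in>A. c a) = 1" "x = (\<lambda>i\<in>I. \<Sum>a\<in>A. c a * f a i)"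
    by blast
  define c' where "c' w = (\<Sum>a\<in>{a\<in>A. f a = w}. c a)" for w
  have "(\<Sum>a\<in>A. c a * g (f a)) = (\<Sum>w\<in>f ` A. c' w * g w)" for g :: "('i \<Rightarrow> real) \<Rightarrow> real"
    unfolding sum.image_gen[OF A, of _ f] c'_def sum_distrib_right by (intro sum.cong) auto
  from this[of "\<lambda>_. 1"] this[of "\<lambda>w. w _"] have "(\<Sum>w\<in>f ` A. c' w) = 1"
    "x = (\<lambda>i\<in>I. \<Sum>w\<in>f ` A. c' w * w i)"
    using c by auto
  moreover have "\<forall>w. 0 \<le> c' w" unfolding c'_def using c(1) by (auto intro: sum_nonneg)
  ultimately show "x \<in> convex_combs I (f ` A)" unfolding convex_combs_def by blast
next
  fix x assume "x \<in> convex_combs I (f ` A)"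
  then obtain c where c: "\<forall>w. 0 \<le> c w" "(\<Sum>w\<in>f ` A. c w) = 1" "x = (\<lambda>i\<in>I. \<Sum>w\<in>f ` A. c w * w i)"
    unfolding convex_combs_def by blast
  txt \<open>Split the weight of each vector evenly among its preimages.\<close>
  define N where "N w = real (card {a\<in>A. f a = w})" for w
  have N: "N w > 0" if "w \<in> f ` A" for w
    using that A unfolding N_def by (auto simp: card_gt_0_iff)
  define d where "d a = c (f a) / N (f a)" for a
  have "(\<Sum>a\<in>A. d a * g (f a)) = (\<Sum>w\<in>f ` A. c w * g w)" for g :: "('i \<Rightarrow> real) \<Rightarrow> real"
  proof -
    have "(\<Sum>a\<in>{a\<in>A. f a = w}. d a * g (f a)) = c w * g w" if "w \<in> f ` A" for w
    proof -
      have "(\<Sum>a\<in>{a\<in>A. f a = w}. d a * g (f a)) = (\<Sum>a\<in>{a\<in>A. f a = w}. c w / N w * g w)"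
        unfolding d_def by (intro sum.cong) auto
      also have "\<dots> = N w * (c w / N w * g w)" by (simp add: N_def)
      finally show ?thesis using N[OF that] by simp
    qed
    then show ?thesis unfolding sum.image_gen[OF A, of _ f] by (intro sum.cong) auto
  qed
  from this[of "\<lambda>_. 1"] this[of "\<lambda>w. w _"] have "(\<Sum>a\<in>A. d a) = 1"
    "x = (\<lambda>i\<in>I. \<Sum>a\<in>A. d a * f a i)"
    using c by auto
  moreover have "\<forall>a. 0 \<le> d a" unfolding d_def N_def using c(1) by auto
  ultimately show "x \<in> {x. \<exists>c. (\<forall>a. 0 \<le> c a) \<and> (\<Sum>a\<in>A. c a) = 1 \<and> x = (\<lambda>i\<in>I. \<Sum>a\<in>A. c a * f a i)}"
    by blast
qed

lemma convex_combs_mono: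
  assumes "finite B" "A \<subseteq> B"
  shows "convex_combs I A \<subseteq> convex_combs I B"
proof
  fix x assume "x \<in> convex_combs I A"
  then obtain c where c: "\<forall>w. 0 \<le> c w" "(\<Sum>w\<in>A. c w) = 1" "x = (\<lambda>i\<in>I. \<Sum>w\<in>A. c w * w i)"
    unfolding convex_combs_def by blast
  define c' where "c' w = (if w \<in> A then c w else 0)" for w
  have "(\<Sum>w\<in>B. c' w * g w) = (\<Sum>w\<in>A. c w * g w)" for g :: "_ \<Rightarrow> real"
  proof -
    have "(\<Sum>w\<in>B. c' w * g w) = (\<Sum>w\<in>A. c' w * g w)"
      using assms by (intro sum.mono_neutral_right) (auto simp: c'_def)
    also have "\<dots> = (\<Sum>w\<in>A. c w * g w)" by (intro sum.cong) (auto simp: c'_def)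
    finally show ?thesis .
  qed
  from this[of "\<lambda>_. 1"] this[of "\<lambda>w. w _"] show "x \<in> convex_combs I B"
    unfolding convex_combs_def using c by (intro CollectI exI[of _ c']) (auto simp: c'_def)
qed

lemma cut_polytope_eq_convex_combs: "cut_polytope n E = convex_combs E (cut_vec E ` Pow {1..n-1})"
  unfolding cut_polytope_def by (rule convex_combs_image) simp

definition block_prod2 :: "'i set \<Rightarrow> 'i set \<Rightarrow> ('i \<Rightarrow> 'a) set \<Rightarrow> ('i \<Rightarrow> 'a) set \<Rightarrow> ('i \<Rightarrow> 'a) set"
  where "block_prod2 I1 I2 A1 A2 =
    {x \<in> extensional (I1 \<union> I2). restrict x I1 \<in> A1 \<and> restrict x I2 \<in> A2}"

definition block_prod :: "'i set set \<Rightarrow> ('i set \<Rightarrow> ('i \<Rightarrow> 'a) set) \<Rightarrow> ('i \<Rightarrow> 'a) set" where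
  "block_prod BB A = {x \<in> extensional (\<Union>BB). \<forall>B\<in>BB. restrict x B \<in> A B}"

lemma restrict_merge:
  assumes "I1 \<inter> I2 = {}" "a \<in> extensional I1" "b \<in> extensional I2"
  shows "restrict (merge I1 I2 (a, b)) I1 = a" "restrict (merge I1 I2 (a, b)) I2 = b"
  using assms by (simp_all add: extensional_restrict)

lemma block_prod2_eq_merge_image:
  assumes "I1 \<inter> I2 = {}" "A1 \<subseteq> extensional I1" "A2 \<subseteq> extensional I2"
  shows "block_prod2 I1 I2 A1 A2 = merge I1 I2 ` (A1 \<times> A2)"
proof (intro equalityI subsetI)
  fix x assume "x \<in> block_prod2 I1 I2 A1 A2"
  then have "x \<in> extensional (I1 \<union> I2)" "restrict x I1 \<in> A1" "restrict x I2 \<in> A2"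
    unfolding block_prod2_def by auto
  moreover have "merge I1 I2 (restrict x I1, restrict x I2) = x" if "x \<in> extensional (I1 \<union> I2)"
    using that by (auto simp: merge_def extensional_def fun_eq_iff)
  ultimately show "x \<in> merge I1 I2 ` (A1 \<times> A2)" by (metis SigmaI image_eqI)
next
  fix x assume "x \<in> merge I1 I2 ` (A1 \<times> A2)"
  then obtain a b where ab: "a \<in> A1" "b \<in> A2" and x: "x = merge I1 I2 (a, b)" by blast
  then have "a \<in> extensional I1" "b \<in> extensional I2" using assms(2,3) by auto
  then have "restrict x I1 = a" "restrict x I2 = b" unfolding x
    by (rule restrict_merge[OF assms(1)])+
  moreover have "x \<in> extensional (I1 \<union> I2)" unfolding x by (auto simp: merge_def extensional_def)
  ultimately show "x \<in> block_prod2 I1 I2 A1 A2" using ab unfolding block_prod2_def by simp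
qed

lemma convex_combs_block_prod2_subset:
  assumes "I1 \<inter> I2 = {}" "finite W1" "finite W2" "W1 \<subseteq> extensional I1" "W2 \<subseteq> extensional I2"
  shows "convex_combs (I1 \<union> I2) (block_prod2 I1 I2 W1 W2) \<subseteq>
    block_prod2 I1 I2 (convex_combs I1 W1) (convex_combs I2 W2)"
proof
  fix x assume "x \<in> convex_combs (I1 \<union> I2) (block_prod2 I1 I2 W1 W2)"
  then obtain c where c: "\<forall>a. 0 \<le> c a" "(\<Sum>a\<in>W1 \<times> W2. c a) = 1"
    and x: "x = (\<lambda>i\<in>I1 \<union> I2. \<Sum>a\<in>W1 \<times> W2. c a * merge I1 I2 a i)"
    unfolding block_prod2_eq_merge_image[OF assms(1,4,5)]
      convex_combs_image[OF finite_cartesian_product[OF assms(2,3)], symmetric]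
    by blast
  have "restrict x I1 = (\<lambda>i\<in>I1. \<Sum>a\<in>W1 \<times> W2. c a * fst a i)"
    unfolding x by (auto simp: merge_def split_beta fun_eq_iff)
  then have "restrict x I1 \<in> convex_combs I1 (fst ` (W1 \<times> W2))"
    using convex_combs_image[of "W1 \<times> W2" fst I1] assms(2,3) c by blast
  moreover have "restrict x I2 = (\<lambda>i\<in>I2. \<Sum>a\<in>W1 \<times> W2. c a * snd a i)"
  proof (rule restrict_ext)
    fix i assume "i \<in> I2"
    then have "i \<notin> I1" using assms(1) by blast
    with \<open>i \<in> I2\<close> show "x i = (\<Sum>a\<in>W1 \<times> W2. c a * snd a i)"
      unfolding x by (simp add: merge_def split_beta)
  qed
  then have "restrict x I2 \<in> convex_combs I2 (snd ` (W1 \<times> W2))"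
    using convex_combs_image[of "W1 \<times> W2" snd I2] assms(2,3) c by blast
  moreover have "convex_combs I1 (fst ` (W1 \<times> W2)) \<subseteq> convex_combs I1 W1"
    "convex_combs I2 (snd ` (W1 \<times> W2)) \<subseteq> convex_combs I2 W2"
    using assms(2,3) by (intro convex_combs_mono; force)+
  ultimately show "x \<in> block_prod2 I1 I2 (convex_combs I1 W1) (convex_combs I2 W2)"
    unfolding block_prod2_def x by auto
qed

lemma block_prod2_convex_combs_subset:
  assumes "I1 \<inter> I2 = {}" "finite W1" "finite W2" "W1 \<subseteq> extensional I1" "W2 \<subseteq> extensional I2"
  shows "block_prod2 I1 I2 (convex_combs I1 W1) (convex_combs I2 W2) \<subseteq>
    convex_combs (I1 \<union> I2) (block_prod2 I1 I2 W1 W2)"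
proof
  fix x assume "x \<in> block_prod2 I1 I2 (convex_combs I1 W1) (convex_combs I2 W2)"
  then have x: "x \<in> extensional (I1 \<union> I2)" "restrict x I1 \<in> convex_combs I1 W1"
    "restrict x I2 \<in> convex_combs I2 W2"
    unfolding block_prod2_def by auto
  obtain c1 where c1: "\<forall>w. 0 \<le> c1 w" "(\<Sum>w\<in>W1. c1 w) = 1"
    "restrict x I1 = (\<lambda>i\<in>I1. \<Sum>w\<in>W1. c1 w * w i)"
    using x(2) unfolding convex_combs_def by blast
  obtain c2 where c2: "\<forall>w. 0 \<le> c2 w" "(\<Sum>w\<in>W2. c2 w) = 1"
    "restrict x I2 = (\<lambda>i\<in>I2. \<Sum>w\<in>W2. c2 w * w i)"
    using x(3) unfolding convex_combs_def by blast
  define c where "c a = c1 (fst a) * c2 (snd a)" for a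
  have sum_c: "(\<Sum>a\<in>W1 \<times> W2. c a * (f (fst a) * g (snd a))) =
      (\<Sum>w\<in>W1. c1 w * f w) * (\<Sum>v\<in>W2. c2 v * g v)" for f g :: "_ \<Rightarrow> real"
    by (simp add: c_def sum_product sum.cartesian_product split_beta mult_ac)
  have "(\<Sum>a\<in>W1 \<times> W2. c a) = 1" using sum_c[of "\<lambda>_. 1" "\<lambda>_. 1"] c1(2) c2(2) by simp
  moreover have "x = (\<lambda>i\<in>I1 \<union> I2. \<Sum>a\<in>W1 \<times> W2. c a * merge I1 I2 a i)"
  proof
    fix i
    consider "i \<in> I1" | "i \<in> I2" "i \<notin> I1" | "i \<notin> I1 \<union> I2" by blast
    then show "x i = (\<lambda>i\<in>I1 \<union> I2. \<Sum>a\<in>W1 \<times> W2. c a * merge I1 I2 a i) i"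
    proof cases
      case 1
      then show ?thesis
        using sum_c[of "\<lambda>w. w i" "\<lambda>_. 1"] c2(2) fun_cong[OF c1(3), of i]
        by (simp add: merge_def split_beta)
    next
      case 2
      then show ?thesis
        using sum_c[of "\<lambda>_. 1" "\<lambda>v. v i"] c1(2) fun_cong[OF c2(3), of i]
        by (simp add: merge_def split_beta)
    next
      case 3
      then show ?thesis using x(1) by (simp add: extensional_def)
    qed
  qed
  moreover have "\<forall>a. 0 \<le> c a" unfolding c_def using c1(1) c2(1) by simp
  ultimately show "x \<in> convex_combs (I1 \<union> I2) (block_prod2 I1 I2 W1 W2)"
    unfolding block_prod2_eq_merge_image[OF assms(1,4,5)]
      convex_combs_image[OF finite_cartesian_product[OF assms(2,3)], symmetric]
    by blast
qed

lemma convex_combs_block_prod2: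
  assumes "I1 \<inter> I2 = {}" "finite W1" "finite W2" "W1 \<subseteq> extensional I1" "W2 \<subseteq> extensional I2"
  shows "convex_combs (I1 \<union> I2) (block_prod2 I1 I2 W1 W2) =
    block_prod2 I1 I2 (convex_combs I1 W1) (convex_combs I2 W2)"
  using convex_combs_block_prod2_subset[OF assms] block_prod2_convex_combs_subset[OF assms]
  by (rule equalityI)

lemma block_prod_insert: "block_prod (insert B BB) A = block_prod2 B (\<Union>BB) (A B) (block_prod BB A)"
proof -
  have "restrict (restrict x (\<Union>BB)) B' = restrict x B'" if "B' \<in> BB" for x :: "'a \<Rightarrow> 'b" and B'
    using that by (auto simp: fun_eq_iff)
  then show ?thesis unfolding block_prod_def block_prod2_def by auto
qed

lemma block_prod_empty: "block_prod {} A = {\<lambda>_. undefined}"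
  unfolding block_prod_def by (auto simp: extensional_def)

lemma disjoint_insert_Int_Union:
  assumes "disjoint (insert B BB)" "B \<notin> BB"
  shows "B \<inter> \<Union>BB = {}"
  using assms unfolding pairwise_insert disjnt_def by blast

lemma block_prod_subset_extensional: "block_prod BB A \<subseteq> extensional (\<Union>BB)"
  unfolding block_prod_def by auto

lemma finite_block_prod:
  assumes "finite BB" "disjoint BB" "\<forall>B\<in>BB. finite (A B) \<and> A B \<subseteq> extensional B"
  shows "finite (block_prod BB A)"
  using assms
proof (induction BB rule: finite_induct)
  case empty
  then show ?case by (simp add: block_prod_empty)
next
  case (insert B BB)
  have "B \<inter> \<Union>BB = {}" using disjoint_insert_Int_Union insert by blast
  then have "block_prod (insert B BB) A = merge B (\<Union>BB) ` (A B \<times> block_prod BB A)"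
    unfolding block_prod_insert using insert.prems(2)
    by (intro block_prod2_eq_merge_image block_prod_subset_extensional) auto
  moreover have "finite (block_prod BB A)"
    using insert by (simp add: pairwise_insert)
  ultimately show ?case using insert.prems(2) by simp
qed

lemma convex_combs_block_prod:
  assumes "finite BB" "disjoint BB" "\<forall>B\<in>BB. finite (W B) \<and> W B \<subseteq> extensional B"
  shows "convex_combs (\<Union>BB) (block_prod BB W) = block_prod BB (\<lambda>B. convex_combs B (W B))"
  using assms
proof (induction BB rule: finite_induct)
  case empty
  have "convex_combs {} {\<lambda>_. undefined} = {\<lambda>_. undefined :: real}"
    unfolding convex_combs_def by (auto intro!: exI[of _ "\<lambda>_. 1"])
  then show ?case by (simp add: block_prod_empty)
next
  case (insert B BB)
  have dj: "B \<inter> \<Union>BB = {}" using disjoint_insert_Int_Union insert by blast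
  have "disjoint BB" using insert.prems(1) by (simp add: pairwise_insert)
  then have "finite (block_prod BB W)"
    "convex_combs (\<Union>BB) (block_prod BB W) = block_prod BB (\<lambda>B. convex_combs B (W B))"
    using insert finite_block_prod by auto
  then show ?case
    unfolding block_prod_insert Union_insert
    using convex_combs_block_prod2[OF dj _ _ _ block_prod_subset_extensional] insert.prems(2)
      by simp
qed

section \<open>Lebesgue measure on vectors indexed by a finite set\<close>

abbreviation lborel_PiM :: "'i set \<Rightarrow> ('i \<Rightarrow> real) measure" where
  "lborel_PiM I \<equiv> PiM I (\<lambda>_. lborel)"

lemma space_lborel_PiM: "space (lborel_PiM I) = extensional I"
  by (auto simp: space_PiM PiE_def)

lemma block_prod2_in_sets:
  assumes "A1 \<in> sets (lborel_PiM I1)" "A2 \<in> sets (lborel_PiM I2)"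
  shows "block_prod2 I1 I2 A1 A2 \<in> sets (lborel_PiM (I1 \<union> I2))"
proof -
  have "block_prod2 I1 I2 A1 A2 =
      ((\<lambda>f. restrict f I1) -` A1 \<inter> space (lborel_PiM (I1 \<union> I2))) \<inter>
      ((\<lambda>f. restrict f I2) -` A2 \<inter> space (lborel_PiM (I1 \<union> I2)))"
    unfolding block_prod2_def space_lborel_PiM by auto
  also have "\<dots> \<in> sets (lborel_PiM (I1 \<union> I2))"
    by (intro sets.Int measurable_sets[OF measurable_restrict_subset assms(1)]
        measurable_sets[OF measurable_restrict_subset assms(2)]) auto
  finally show ?thesis .
qed

lemma emeasure_block_prod2:
  fixes I1 I2 :: "'i set"
  assumes dj: "I1 \<inter> I2 = {}" and fin: "finite I1" "finite I2"
    and A: "A1 \<in> sets (lborel_PiM I1)" "A2 \<in> sets (lborel_PiM I2)"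
  shows "emeasure (lborel_PiM (I1 \<union> I2)) (block_prod2 I1 I2 A1 A2) =
    emeasure (lborel_PiM I1) A1 * emeasure (lborel_PiM I2) A2"
proof -
  interpret product_sigma_finite "\<lambda>_::'i. lborel :: real measure" by standard
  interpret I2: finite_product_sigma_finite "\<lambda>_::'i. lborel :: real measure" I2 by standard fact
  have ext: "A1 \<subseteq> extensional I1" "A2 \<subseteq> extensional I2"
    using sets.sets_into_space[OF A(1)] sets.sets_into_space[OF A(2)]
      by (auto simp: space_lborel_PiM)
  have "merge I1 I2 -` block_prod2 I1 I2 A1 A2 \<inter> space (lborel_PiM I1 \<Otimes>\<^sub>M lborel_PiM I2) = A1 \<times> A2"
  proof (intro equalityI subsetI)
    fix p
    assume p: "p \<in> merge I1 I2 -` block_prod2 I1 I2 A1 A2 \<inter>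
      space (lborel_PiM I1 \<Otimes>\<^sub>M lborel_PiM I2)"
    obtain a b where p_eq: "p = (a, b)" by (cases p)
    from p have "a \<in> extensional I1" "b \<in> extensional I2"
      "merge I1 I2 (a, b) \<in> block_prod2 I1 I2 A1 A2"
      unfolding p_eq by (auto simp: space_pair_measure space_lborel_PiM)
    then show "p \<in> A1 \<times> A2"
      unfolding p_eq block_prod2_def using restrict_merge[OF dj, of a b] by auto
  next
    fix p assume "p \<in> A1 \<times> A2"
    then have "p \<in> space (lborel_PiM I1 \<Otimes>\<^sub>M lborel_PiM I2)"
      "merge I1 I2 p \<in> block_prod2 I1 I2 A1 A2"
      using ext block_prod2_eq_merge_image[OF dj ext]
        by (auto simp: space_pair_measure space_lborel_PiM)
    then show "p \<in> merge I1 I2 -` block_prod2 I1 I2 A1 A2 \<inter> space (lborel_PiM I1 \<Otimes>\<^sub>M lborel_PiM I2)"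
      by blast
  qed
  moreover have "lborel_PiM (I1 \<union> I2) =
      distr (lborel_PiM I1 \<Otimes>\<^sub>M lborel_PiM I2) (lborel_PiM (I1 \<union> I2)) (merge I1 I2)"
    using distr_merge[OF dj fin] by simp
  ultimately have "emeasure (lborel_PiM (I1 \<union> I2)) (block_prod2 I1 I2 A1 A2) =
      emeasure (lborel_PiM I1 \<Otimes>\<^sub>M lborel_PiM I2) (A1 \<times> A2)"
    using emeasure_distr[OF measurable_merge block_prod2_in_sets[OF A]] by simp
  also have "\<dots> = emeasure (lborel_PiM I1) A1 * emeasure (lborel_PiM I2) A2"
    by (rule I2.emeasure_pair_measure_Times[OF A])
  finally show ?thesis .
qed

lemma block_prod_in_sets:
  assumes "finite BB" "\<forall>B\<in>BB. A B \<in> sets (lborel_PiM B)"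
  shows "block_prod BB A \<in> sets (lborel_PiM (\<Union>BB))"
  using assms
proof (induction BB rule: finite_induct)
  case empty
  have "block_prod {} A = space (lborel_PiM {})"
    by (simp add: block_prod_empty space_lborel_PiM)
  then show ?case by simp
next
  case (insert B BB)
  then show ?case unfolding block_prod_insert Union_insert by (simp add: block_prod2_in_sets)
qed

lemma emeasure_block_prod:
  assumes "finite BB" "disjoint BB" "\<forall>B\<in>BB. finite B \<and> A B \<in> sets (lborel_PiM B)"
  shows "emeasure (lborel_PiM (\<Union>BB)) (block_prod BB A) = (\<Prod>B\<in>BB. emeasure (lborel_PiM B) (A B))"
  using assms
proof (induction BB rule: finite_induct)
  case empty
  have "block_prod {} A = space (lborel_PiM {})"
    by (simp add: block_prod_empty space_lborel_PiM)
  then show ?case by (simp add: PiM_empty)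
next
  case (insert B BB)
  have dj: "B \<inter> \<Union>BB = {}" using disjoint_insert_Int_Union insert by blast
  have "disjoint BB" using insert.prems(1) by (simp add: pairwise_insert)
  then have IH: "emeasure (lborel_PiM (\<Union>BB)) (block_prod BB A) =
      (\<Prod>B\<in>BB. emeasure (lborel_PiM B) (A B))"
    using insert by simp
  have "finite (\<Union>BB)" "block_prod BB A \<in> sets (lborel_PiM (\<Union>BB))"
    using insert block_prod_in_sets by auto
  then show ?case
    unfolding block_prod_insert Union_insert
    using emeasure_block_prod2[OF dj] insert.prems(2) insert.hyps IH by simp
qed

lemma compact_nat_simplex:
  "compact {d :: nat \<Rightarrow> real. (\<forall>j. d j \<in> {0..1}) \<and> (\<forall>j\<ge>m. d j = 0) \<and> (\<Sum>j<m. d j) = 1}"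
proof -
  have "compactin (product_topology (\<lambda>_. euclidean) UNIV) (PiE UNIV (\<lambda>_::nat. {0..1::real}))"
    by (subst compactin_PiE) auto
  then have "compact {d :: nat \<Rightarrow> real. \<forall>j. d j \<in> {0..1}}"
    by (simp add: euclidean_product_topology PiE_UNIV_domain Pi_def)
  moreover have "closed {d :: nat \<Rightarrow> real. \<forall>j\<ge>m. d j = 0}"
    unfolding Collect_all_eq Collect_imp_eq
    by (intro closed_INT closed_Un ballI closed_Collect_eq) (auto intro: continuous_on_const)
  moreover have "closed {d :: nat \<Rightarrow> real. (\<Sum>j<m. d j) = 1}"
    by (intro closed_Collect_eq continuous_on_sum) (auto intro: continuous_on_const)
  ultimately show ?thesis
    unfolding Collect_conj_eq by (intro compact_Int_closed closed_Int)
qed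

definition reindex :: "'j set \<Rightarrow> ('j \<Rightarrow> 'i) \<Rightarrow> ('i \<Rightarrow> 'a) \<Rightarrow> 'j \<Rightarrow> 'a" where
  "reindex K \<sigma> x = (\<lambda>j\<in>K. x (\<sigma> j))"

lemma reindex_reindex_inv:
  assumes "bij_betw \<sigma> K C" "y \<in> extensional K"
  shows "reindex K \<sigma> (reindex C (the_inv_into K \<sigma>) y) = y"
  using assms by (auto simp: reindex_def fun_eq_iff bij_betw_def the_inv_into_f_f extensional_def)

lemma inj_on_reindex:
  assumes "bij_betw \<sigma> K C"
  shows "inj_on (reindex K \<sigma>) (extensional C)"
proof
  fix x y assume x: "x \<in> extensional C" and y: "y \<in> extensional C"
    and eq: "reindex K \<sigma> x = reindex K \<sigma> y"
  show "x = y"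
  proof
    fix i show "x i = y i"
    proof (cases "i \<in> C")
      case True
      then obtain j where "j \<in> K" "\<sigma> j = i" using assms by (auto simp: bij_betw_def)
      then show ?thesis using fun_cong[OF eq, of j] by (simp add: reindex_def)
    next
      case False then show ?thesis using x y by (simp add: extensional_def)
    qed
  qed
qed

lemma measurable_reindex:
  assumes "\<sigma> \<in> K \<rightarrow> C"
  shows "reindex K \<sigma> \<in> measurable (lborel_PiM C) (lborel_PiM K)"
  unfolding reindex_def using assms
  by (intro measurable_restrict measurable_component_singleton) auto

lemma reindex_vimage_PiE:
  assumes bij: "bij_betw \<sigma> K C"
  shows "reindex K \<sigma> -` PiE K A \<inter> extensional C = PiE C (\<lambda>i. A (the_inv_into K \<sigma> i))"
proof (intro equalityI subsetI)
  fix x assume "x \<in> reindex K \<sigma> -` PiE K A \<inter> extensional C"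
  then have "\<forall>j\<in>K. x (\<sigma> j) \<in> A j" "x \<in> extensional C"
    by (auto simp: reindex_def PiE_def Pi_def)
  moreover have "\<sigma> (the_inv_into K \<sigma> i) = i" "the_inv_into K \<sigma> i \<in> K" if "i \<in> C" for i
    using bij that by (auto simp: bij_betw_def f_the_inv_into_f the_inv_into_into)
  ultimately show "x \<in> PiE C (\<lambda>i. A (the_inv_into K \<sigma> i))" by (auto simp: PiE_def) metis
next
  fix x assume "x \<in> PiE C (\<lambda>i. A (the_inv_into K \<sigma> i))"
  moreover have "the_inv_into K \<sigma> (\<sigma> j) = j" "\<sigma> j \<in> C" if "j \<in> K" for j
    using bij that by (auto simp: bij_betw_def the_inv_into_f_f)
  ultimately show "x \<in> reindex K \<sigma> -` PiE K A \<inter> extensional C"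
    by (auto simp: reindex_def PiE_def Pi_def) metis
qed

lemma distr_reindex:
  fixes \<sigma> :: "'j \<Rightarrow> 'i"
  assumes bij: "bij_betw \<sigma> K C" and "finite K"
  shows "distr (lborel_PiM C) (lborel_PiM K) (reindex K \<sigma>) = lborel_PiM K"
proof -
  interpret product_sigma_finite "\<lambda>_::'j. lborel :: real measure" by standard
  interpret C: product_sigma_finite "\<lambda>_::'i. lborel :: real measure" by standard
  let ?\<tau> = "the_inv_into K \<sigma>"
  have \<tau>: "bij_betw ?\<tau> C K" by (rule bij_betw_the_inv_into[OF bij])
  have "finite C" using bij \<open>finite K\<close> bij_betw_finite by blast
  show ?thesis
  proof (rule PiM_eqI[OF \<open>finite K\<close>])
    fix A :: "'j \<Rightarrow> real set" assume A: "\<And>j. j \<in> K \<Longrightarrow> A j \<in> sets lborel"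
    have "emeasure (distr (lborel_PiM C) (lborel_PiM K) (reindex K \<sigma>)) (PiE K A) =
        emeasure (lborel_PiM C) (reindex K \<sigma> -` PiE K A \<inter> space (lborel_PiM C))"
      using A bij_betw_imp_funcset[OF bij]
      by (intro emeasure_distr measurable_reindex sets_PiM_I_finite \<open>finite K\<close>) auto
    also have "\<dots> = emeasure (lborel_PiM C) (PiE C (\<lambda>i. A (?\<tau> i)))"
      unfolding space_lborel_PiM reindex_vimage_PiE[OF bij] ..
    also have "\<dots> = (\<Prod>i\<in>C. emeasure lborel (A (?\<tau> i)))"
      using A \<tau> \<open>finite C\<close> by (intro C.emeasure_PiM) (auto simp: bij_betw_def)
    also have "\<dots> = (\<Prod>j\<in>K. emeasure lborel (A j))"
      by (rule prod.reindex_bij_betw[OF \<tau>])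
    finally show "emeasure (distr (lborel_PiM C) (lborel_PiM K) (reindex K \<sigma>)) (PiE K A) =
        (\<Prod>j\<in>K. emeasure lborel (A j))" .
  qed simp
qed

lemma measure_reindex_image:
  assumes bij: "bij_betw \<sigma> K C" and "finite K"
    and "reindex K \<sigma> ` A \<in> sets (lborel_PiM K)" "A \<subseteq> extensional C"
  shows "measure (lborel_PiM K) (reindex K \<sigma> ` A) = measure (lborel_PiM C) A"
proof -
  have \<sigma>: "\<sigma> \<in> K \<rightarrow> C" using bij by (auto simp: bij_betw_def)
  have "reindex K \<sigma> -` (reindex K \<sigma> ` A) \<inter> space (lborel_PiM C) = A"
    using inj_on_image_mem_iff[OF inj_on_reindex[OF bij]] assms(4)
    by (auto simp: space_lborel_PiM)
  then show ?thesis
    using measure_distr[OF measurable_reindex[OF \<sigma>] assms(3)] distr_reindex[OF assms(1,2)] by simp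
qed

lemma reindex_convex_combs:
  assumes "finite W" "\<sigma> \<in> K \<rightarrow> C"
  shows "reindex K \<sigma> ` convex_combs C W = convex_combs K (reindex K \<sigma> ` W)"
proof -
  have reindex_comb: "reindex K \<sigma> (\<lambda>i\<in>C. \<Sum>w\<in>W. c w * w i) =
      (\<lambda>j\<in>K. \<Sum>w\<in>W. c w * reindex K \<sigma> w j)" for c
    using assms(2) by (auto simp: reindex_def fun_eq_iff)
  show ?thesis
  proof (intro equalityI subsetI)
    fix y assume "y \<in> reindex K \<sigma> ` convex_combs C W"
    then obtain c where "\<forall>w. 0 \<le> c w" "(\<Sum>w\<in>W. c w) = 1" "y = reindex K \<sigma> (\<lambda>i\<in>C. \<Sum>w\<in>W. c w * w i)"
      unfolding convex_combs_def by blast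
    then show "y \<in> convex_combs K (reindex K \<sigma> ` W)"
      unfolding convex_combs_image[OF assms(1), symmetric] reindex_comb by blast
  next
    fix y assume "y \<in> convex_combs K (reindex K \<sigma> ` W)"
    then obtain c where c: "\<forall>w. 0 \<le> c w" "(\<Sum>w\<in>W. c w) = 1"
      and "y = (\<lambda>j\<in>K. \<Sum>w\<in>W. c w * reindex K \<sigma> w j)"
      unfolding convex_combs_image[OF assms(1), symmetric] by blast
    then have "y = reindex K \<sigma> (\<lambda>i\<in>C. \<Sum>w\<in>W. c w * w i)" by (simp add: reindex_comb)
    moreover have "(\<lambda>i\<in>C. \<Sum>w\<in>W. c w * w i) \<in> convex_combs C W"
      unfolding convex_combs_def using c by blast
    ultimately show "y \<in> reindex K \<sigma> ` convex_combs C W" by blast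
  qed
qed

lemma closed_convex_combs_nat:
  fixes J :: "nat set"
  assumes "finite V"
  shows "closed (convex_combs J V)"
proof -
  obtain ws where ws: "set ws = V" using finite_list[OF assms] by blast
  define m where "m = length ws"
  define D where "D = {d :: nat \<Rightarrow> real. (\<forall>j. d j \<in> {0..1}) \<and> (\<forall>j\<ge>m. d j = 0) \<and> (\<Sum>j<m. d j) = 1}"
  define L where "L d = (\<lambda>j\<in>J. \<Sum>a<m. d a * (ws ! a) j)" for d :: "nat \<Rightarrow> real"
  have "V = (\<lambda>a. ws ! a) ` {..<m}" using ws unfolding m_def by (auto simp: in_set_conv_nth)
  then have conv_eq: "convex_combs J V = {x. \<exists>c. (\<forall>a. 0 \<le> c a) \<and> (\<Sum>a<m. c a) = 1 \<and> x = L c}"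
    unfolding L_def by (simp add: convex_combs_image)
  have "convex_combs J V = L ` D"
  proof (intro equalityI subsetI)
    fix x assume "x \<in> convex_combs J V"
    then obtain c where c: "\<forall>a. 0 \<le> c a" "(\<Sum>a<m. c a) = 1" "x = L c" unfolding conv_eq by blast
    define d where "d a = (if a < m then c a else 0)" for a
    have "c a \<le> 1" if "a < m" for a
      using member_le_sum[of a "{..<m}" c] c(1,2) that by auto
    then have "d \<in> D" unfolding D_def d_def using c(1,2) by auto
    moreover have "L d = L c" unfolding L_def d_def by simp
    ultimately show "x \<in> L ` D" using c(3) by (metis image_eqI)
  next
    fix x assume "x \<in> L ` D"
    then show "x \<in> convex_combs J V" unfolding conv_eq D_def by auto
  qed
  moreover have "compact D" unfolding D_def by (rule compact_nat_simplex)
  moreover have "continuous_on D L"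
  proof -
    have "continuous_on D (\<lambda>d. d a)" for a
      by (rule continuous_on_subset[OF continuous_on_product_coordinates]) simp
    then have "continuous_on D (\<lambda>d. L d j)" for j
      unfolding L_def by (cases "j \<in> J") (simp_all add: continuous_on_sum continuous_on_mult_right)
    then show ?thesis by (rule continuous_on_coordinatewise_then_product)
  qed
  ultimately show ?thesis by (metis compact_continuous_image compact_imp_closed)
qed

lemma measurable_reindex_countable:
  fixes b :: "'j::countable \<Rightarrow> 'i"
  assumes "b \<in> K \<rightarrow> I"
  shows "reindex K b \<in> borel_measurable (lborel_PiM I)"
proof (rule measurable_coordinatewise_then_product)
  fix j
  show "(\<lambda>x. reindex K b x j) \<in> borel_measurable (lborel_PiM I)"
  proof (cases "j \<in> K")
    case True
    then have "(\<lambda>x. x (b j)) \<in> measurable (lborel_PiM I) lborel"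
      using assms by (intro measurable_component_singleton) auto
    then show ?thesis using True by (simp add: reindex_def)
  qed (simp add: reindex_def)
qed

text \<open>The index set may be uncountable, so it is relabelled by natural numbers, where closed
  sets of vectors are Borel sets.\<close>

lemma convex_combs_in_sets:
  assumes "finite I" "finite W"
  shows "convex_combs I W \<in> sets (lborel_PiM I)"
proof -
  obtain b where b: "bij_betw b {..<card I} I"
    using ex_bij_betw_nat_finite[OF assms(1)] unfolding lessThan_atLeast0 by blast
  let ?R = "reindex {..<card I} b"
  have ext: "convex_combs I W \<subseteq> extensional I" by (rule convex_combs_subset_extensional)
  have "convex_combs I W = ?R -` (?R ` convex_combs I W) \<inter> space (lborel_PiM I)"
    unfolding space_lborel_PiM using inj_on_image_mem_iff[OF inj_on_reindex[OF b] _ ext] ext by auto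
  also have "\<dots> = ?R -` convex_combs {..<card I} (?R ` W) \<inter> space (lborel_PiM I)"
    by (simp only: reindex_convex_combs[OF assms(2) bij_betw_imp_funcset[OF b]])
  also have "\<dots> \<in> sets (lborel_PiM I)"
    using assms(2) by (intro measurable_sets[OF measurable_reindex_countable] borel_closed
        closed_convex_combs_nat finite_imageI bij_betw_imp_funcset[OF b])
  finally show ?thesis .
qed

section \<open>The cut polytope of a cycle\<close>

lemma finite_binary_vectors:
  assumes "finite X"
  shows "finite (binary_vectors X)"
proof (rule finite_subset)
  show "binary_vectors X \<subseteq> PiE X (\<lambda>_. {0, 1})" by (auto simp: binary_vectors_def PiE_def Pi_def)
  show "finite (PiE X (\<lambda>_. {0, 1 :: real}))" using assms by (intro finite_PiE) auto
qed

lemma finite_even_vectors: "finite X \<Longrightarrow> finite (even_vectors X)"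
  by (rule finite_subset[OF _ finite_binary_vectors]) (auto simp: even_vectors_def)

lemma reindex_even_vectors_subset:
  assumes "bij_betw \<sigma> K C"
  shows "reindex K \<sigma> ` even_vectors C \<subseteq> even_vectors K"
proof
  fix y assume "y \<in> reindex K \<sigma> ` even_vectors C"
  then obtain w where w: "w \<in> even_vectors C" "y = reindex K \<sigma> w" by blast
  have "{e \<in> C. w e = 1} = \<sigma> ` {j \<in> K. y j = 1}"
    using assms w(2) by (auto simp: bij_betw_def reindex_def)
  moreover have "inj_on \<sigma> {j \<in> K. y j = 1}"
    using assms by (auto simp: bij_betw_def intro: inj_on_subset)
  ultimately have "card {j \<in> K. y j = 1} = card {e \<in> C. w e = 1}" by (simp add: card_image)
  then show "y \<in> even_vectors K"
    using w assms by (auto simp: even_vectors_def binary_vectors_def reindex_def bij_betw_def)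
qed

lemma reindex_even_vectors:
  assumes "bij_betw \<sigma> K C"
  shows "reindex K \<sigma> ` even_vectors C = even_vectors K"
proof
  show "even_vectors K \<subseteq> reindex K \<sigma> ` even_vectors C"
  proof
    fix y assume y: "y \<in> even_vectors K"
    then have "y = reindex K \<sigma> (reindex C (the_inv_into K \<sigma>) y)"
      using reindex_reindex_inv[OF assms, of y] by (simp add: even_vectors_def binary_vectors_def)
    moreover have "reindex C (the_inv_into K \<sigma>) y \<in> even_vectors C"
      using reindex_even_vectors_subset[OF bij_betw_the_inv_into[OF assms]] y by blast
    ultimately show "y \<in> reindex K \<sigma> ` even_vectors C" by blast
  qed
qed (rule reindex_even_vectors_subset[OF assms])

lemma cyclic_labelling_exists:
  fixes a :: "nat \<Rightarrow> bool"
  assumes "1 \<le> k" "even (card {i. i < k \<and> a i})"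
  obtains S where "S \<subseteq> {1..k-1}"
    "\<And>i. i < k \<Longrightarrow> (i + 1 \<in> S) \<noteq> ((i + 1) mod k + 1 \<in> S) \<longleftrightarrow> a i"
proof
  txt \<open>Vertex \<open>j + 1\<close> is labelled by the parity of the number of marked edges after it.\<close>
  define N where "N j = card {i. j \<le> i \<and> i < k - 1 \<and> a i}" for j
  define S where "S = Suc ` {j. j < k \<and> odd (N j)}"
  have N_step: "N j = N (Suc j) + (if a j then 1 else 0)" if "j < k - 1" for j
  proof -
    have "{i. j \<le> i \<and> i < k - 1 \<and> a i} =
        (if a j then insert j else id) {i. Suc j \<le> i \<and> i < k - 1 \<and> a i}"
      using that by (auto simp: Suc_le_eq le_less)
    then show ?thesis unfolding N_def by (simp add: card_insert_if)
  qed
  have N_last: "N (k - 1) = 0" unfolding N_def by simp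
  have "{i. i < k \<and> a i} = (if a (k - 1) then insert (k - 1) else id) {i. 0 \<le> i \<and> i < k - 1 \<and> a i}"
    using assms(1) by (cases k) (auto simp: less_Suc_eq)
  then have "card {i. i < k \<and> a i} = N 0 + (if a (k - 1) then 1 else 0)"
    unfolding N_def by (simp add: card_insert_if)
  then have N_first: "odd (N 0) \<longleftrightarrow> a (k - 1)" using assms(2) by auto
  have S_iff: "j + 1 \<in> S \<longleftrightarrow> j < k \<and> odd (N j)" for j unfolding S_def by auto
  show "S \<subseteq> {1..k-1}"
  proof
    fix v assume "v \<in> S"
    then obtain j where j: "v = Suc j" "j < k" "odd (N j)" unfolding S_def by blast
    then have "j \<noteq> k - 1" using N_last by auto
    then show "v \<in> {1..k-1}" using j by auto
  qed
  fix i assume i: "i < k"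
  show "(i + 1 \<in> S) \<noteq> ((i + 1) mod k + 1 \<in> S) \<longleftrightarrow> a i"
  proof (cases "i + 1 < k")
    case True
    then show ?thesis using S_iff[of i] S_iff[of "i + 1"] N_step[of i] by auto
  next
    case False
    then have "i = k - 1" using i by simp
    then show ?thesis using S_iff[of i] S_iff[of 0] N_last N_first assms(1) by auto
  qed
qed

lemma cycle_edge_upt:
  assumes "i < k"
  shows "cycle_edge [1..<k+1] i = {i + 1, (i + 1) mod k + 1}"
  using assms by (simp add: cycle_edge_def nth_upt del: upt_Suc)

lemma cycle_graph_eq_cycle_of:
  assumes "3 \<le> k"
  shows "cycle_graph k = cycle_of [1..<k+1]"
proof -
  have image: "cycle_of [1..<k+1] = cycle_edge [1..<k+1] ` {..<k}"
    using cycle_of_eq_image[of "[1..<k+1]"] by (simp del: upt_Suc)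
  show ?thesis
  proof (intro equalityI subsetI)
    fix e assume "e \<in> cycle_graph k"
    then consider (path) i where "e = {i, i + 1}" "1 \<le> i" "i < k" | (closing) "e = {k, 1}"
      unfolding cycle_graph_def by auto
    then show "e \<in> cycle_of [1..<k+1]"
    proof cases
      case (path i)
      then have "cycle_edge [1..<k+1] (i - 1) = e" using cycle_edge_upt[of "i - 1" k]
        by (simp del: upt_Suc)
      then show ?thesis unfolding image using path by (intro image_eqI[of e _ "i - 1"]) auto
    next
      case closing
      then have "cycle_edge [1..<k+1] (k - 1) = e" using cycle_edge_upt[of "k - 1" k] assms
        by (simp del: upt_Suc)
      then show ?thesis unfolding image using assms by (intro image_eqI[of e _ "k - 1"]) auto
    qed
  next
    fix e assume "e \<in> cycle_of [1..<k+1]"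
    then obtain i where i: "i < k" "e = cycle_edge [1..<k+1] i" unfolding image by auto
    show "e \<in> cycle_graph k"
    proof (cases "i + 1 < k")
      case True
      then have "e = {i + 1, i + 1 + 1}" using cycle_edge_upt[OF i(1)] i(2) by (simp del: upt_Suc)
      then show ?thesis unfolding cycle_graph_def using True
        by (intro UnI1 CollectI exI[of _ "i + 1"]) auto
    next
      case False
      then have "i = k - 1" using i by simp
      then have "e = {k, 1}" using cycle_edge_upt[OF i(1)] i assms by (simp del: upt_Suc)
      then show ?thesis unfolding cycle_graph_def by simp
    qed
  qed
qed

lemma bij_betw_cycle_edge_cycle_graph:
  assumes "3 \<le> k"
  shows "bij_betw (cycle_edge [1..<k+1]) {..<k} (cycle_graph k)"
  using bij_betw_cycle_edge[of "[1..<k+1]"] assms cycle_graph_eq_cycle_of[OF assms]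
    by (simp del: upt_Suc)

lemma cut_vectors_cycle_graph:
  assumes k: "3 \<le> k"
  shows "cut_vec (cycle_graph k) ` Pow {1..k-1} = even_vectors (cycle_graph k)"
proof (intro equalityI subsetI)
  have "is_cycle (cycle_graph k) (cycle_graph k)"
    unfolding is_cycle_def using cycle_graph_eq_cycle_of[OF k] k
      by (intro exI[of _ "[1..<k+1]"]) simp
  then show "x \<in> even_vectors (cycle_graph k)" if "x \<in> cut_vec (cycle_graph k) ` Pow {1..k-1}" for x
    using that even_cut_vec_support cut_vec_in_binary_vectors by (auto simp: even_vectors_def)
next
  fix y assume y: "y \<in> even_vectors (cycle_graph k)"
  define g where "g = cycle_edge [1..<k+1]"
  have g: "bij_betw g {..<k} (cycle_graph k)"
    unfolding g_def by (rule bij_betw_cycle_edge_cycle_graph[OF k])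
  define a where "a i = (y (g i) = 1)" for i
  have g_onto: "cycle_graph k = g ` {..<k}" using g by (simp add: bij_betw_def)
  then have "{e \<in> cycle_graph k. y e = 1} = g ` {i. i < k \<and> a i}" unfolding a_def by auto
  moreover have "inj_on g {i. i < k \<and> a i}" using g
    by (auto simp: bij_betw_def intro: inj_on_subset)
  ultimately have "even (card {i. i < k \<and> a i})" using y by (simp add: even_vectors_def card_image)
  then obtain S where S: "S \<subseteq> {1..k-1}"
    and labels: "\<And>i. i < k \<Longrightarrow> (i + 1 \<in> S) \<noteq> ((i + 1) mod k + 1 \<in> S) \<longleftrightarrow> a i"
    using cyclic_labelling_exists[of k a] k by auto
  have edge: "cut_vec (cycle_graph k) S (g i) = y (g i)" if i: "i < k" for i
  proof -
    have "i + 1 \<noteq> (i + 1) mod k + 1" using k i by (cases "i + 1 = k") auto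
    then have "card (g i \<inter> S) = 1 \<longleftrightarrow> a i"
      unfolding g_def cycle_edge_upt[OF i] using card_doubleton_Int_eq_1[of _ _ S] labels[OF i]
        by blast
    moreover have "g i \<in> cycle_graph k" using g i by (auto simp: bij_betw_def)
    ultimately show ?thesis using y
      by (auto simp: cut_vec_def a_def even_vectors_def binary_vectors_def)
  qed
  have "cut_vec (cycle_graph k) S e = y e" for e
  proof (cases "e \<in> cycle_graph k")
    case True
    then obtain i where "i < k" "e = g i" using g_onto by auto
    then show ?thesis using edge by simp
  next
    case False
    then show ?thesis
      using y by (simp add: cut_vec_def even_vectors_def binary_vectors_def extensional_def)
  qed
  then have "cut_vec (cycle_graph k) S = y" ..
  then show "y \<in> cut_vec (cycle_graph k) ` Pow {1..k-1}" using S by blast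
qed

lemma card_cycle_of:
  assumes "distinct vs" "3 \<le> length vs"
  shows "card (cycle_of vs) = length vs"
  using bij_betw_same_card[OF bij_betw_cycle_edge[OF assms]] by simp

lemma measure_even_vectors_cycle:
  assumes "is_cycle E C"
  shows "measure (lborel_PiM C) (convex_combs C (even_vectors C)) =
    cut_vol (card C) (cycle_graph (card C))"
proof -
  obtain vs where vs: "3 \<le> length vs" "distinct vs" "C = cycle_of vs"
    using assms unfolding is_cycle_def by auto
  define k where "k = card C"
  have k: "3 \<le> k" "k = length vs" using card_cycle_of[OF vs(2,1)] vs by (auto simp: k_def)
  let ?K = "cycle_graph k"
  define \<sigma> where "\<sigma> = cycle_edge vs \<circ> inv_into {..<k} (cycle_edge [1..<k+1])"
  have \<sigma>: "bij_betw \<sigma> ?K C"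
    unfolding \<sigma>_def using bij_betw_cycle_edge[OF vs(2,1)] vs(3) k(2)
    by (intro bij_betw_trans[OF bij_betw_inv_into[OF bij_betw_cycle_edge_cycle_graph[OF k(1)]]])
      simp
  have "finite ?K" using bij_betw_finite[OF bij_betw_cycle_edge_cycle_graph[OF k(1)]] by simp
  then have fin: "finite ?K" "finite C" using bij_betw_finite[OF \<sigma>] by auto
  have "reindex ?K \<sigma> ` convex_combs C (even_vectors C) = convex_combs ?K (even_vectors ?K)"
    using reindex_convex_combs[OF finite_even_vectors[OF fin(2)] bij_betw_imp_funcset[OF \<sigma>]]
      reindex_even_vectors[OF \<sigma>] by simp
  moreover have "convex_combs ?K (even_vectors ?K) \<in> sets (lborel_PiM ?K)"
    using fin by (intro convex_combs_in_sets finite_even_vectors)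
  ultimately have "measure (lborel_PiM C) (convex_combs C (even_vectors C)) =
      measure (lborel_PiM ?K) (convex_combs ?K (even_vectors ?K))"
    using measure_reindex_image[OF \<sigma> fin(1)] convex_combs_subset_extensional by metis
  also have "\<dots> = cut_vol k ?K"
    unfolding cut_vol_def cut_polytope_eq_convex_combs cut_vectors_cycle_graph[OF k(1)] ..
  finally show ?thesis by (simp add: k_def)
qed

lemma measure_binary_vectors_singleton:
  "measure (lborel_PiM {e}) (convex_combs {e} (binary_vectors {e})) = 1"
proof -
  have "binary_vectors {e} = (\<lambda>t. \<lambda>i\<in>{e}. t) ` {0, 1}"
    by (auto simp: binary_vectors_def extensional_def fun_eq_iff)
  then have "convex_combs {e} (binary_vectors {e}) = {x. \<exists>c. (\<forall>t. 0 \<le> c t) \<and>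
      (\<Sum>t\<in>{0, 1}. c t) = 1 \<and> x = (\<lambda>i\<in>{e}. \<Sum>t\<in>{0, 1}. c t * (\<lambda>i\<in>{e}. t) i)}"
    using convex_combs_image[of "{0, 1}" "\<lambda>t. \<lambda>i\<in>{e}. t" "{e}"] by simp
  also have "\<dots> = {x. \<exists>c :: real \<Rightarrow> real. (\<forall>t. 0 \<le> c t) \<and> c 0 + c 1 = 1 \<and> x = (\<lambda>i\<in>{e}. c 1)}"
    by (simp cong: restrict_cong)
  also have "\<dots> = PiE {e} (\<lambda>_. {0..1})"
  proof (intro equalityI subsetI)
    fix x assume "x \<in> {x. \<exists>c :: real \<Rightarrow> real. (\<forall>t. 0 \<le> c t) \<and> c 0 + c 1 = 1 \<and> x = (\<lambda>i\<in>{e}. c 1)}"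
    then obtain c :: "real \<Rightarrow> real" where "\<forall>t. 0 \<le> c t" "c 0 + c 1 = 1" "x = (\<lambda>i\<in>{e}. c 1)" by blast
    then show "x \<in> PiE {e} (\<lambda>_. {0..1})"
      by (auto simp: PiE_def) (metis add_increasing le_add_same_cancel2)
  next
    fix x :: "'a \<Rightarrow> real" assume x: "x \<in> PiE {e} (\<lambda>_. {0..1})"
    then have "x = (\<lambda>i\<in>{e}. x e)" by (auto simp: PiE_def extensional_def fun_eq_iff)
    moreover have "\<forall>t. 0 \<le> (if t = 1 then x e else 1 - x e)" using x by auto
    ultimately show "x \<in> {x. \<exists>c :: real \<Rightarrow> real. (\<forall>t. 0 \<le> c t) \<and> c 0 + c 1 = 1 \<and> x = (\<lambda>i\<in>{e}. c 1)}"
      by (intro CollectI exI[of _ "\<lambda>t. if t = 1 then x e else 1 - x e"]) auto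
  qed
  finally have eq: "convex_combs {e} (binary_vectors {e}) = PiE {e} (\<lambda>_. {0..1})" .
  interpret product_sigma_finite "\<lambda>_::'a. lborel :: real measure" by standard
  have "emeasure (lborel_PiM {e}) (PiE {e} (\<lambda>_. {0..1})) = (\<Prod>i\<in>{e}. emeasure lborel {0..1::real})"
    by (rule emeasure_PiM) auto
  then show ?thesis unfolding eq measure_def by simp
qed

section \<open>Cacti\<close>

lemma cycles_subset: "C \<in> cycles E \<Longrightarrow> C \<subseteq> E"
  unfolding cycles_def is_cycle_def by auto

lemma finite_cycles:
  assumes "finite E"
  shows "finite (cycles E)"
proof (rule finite_subset)
  show "cycles E \<subseteq> Pow E" using cycles_subset by blast
  show "finite (Pow E)" using assms by simp
qed

lemma disjoint_cycles_cactus: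
  assumes "cactus n E"
  shows "disjoint (cycles E)"
  unfolding disjoint_def
proof (intro ballI impI)
  fix C1 C2 assume C: "C1 \<in> cycles E" "C2 \<in> cycles E" "C1 \<noteq> C2"
  show "C1 \<inter> C2 = {}"
  proof (rule ccontr)
    assume "C1 \<inter> C2 \<noteq> {}"
    then obtain e where "e \<in> C1" "e \<in> C2" by blast
    then show False using assms C cycles_subset unfolding cactus_def cycles_def by blast
  qed
qed

definition cactus_blocks :: "nat set set \<Rightarrow> nat set set set" where
  "cactus_blocks E = cycles E \<union> (\<lambda>e. {e}) ` (E - \<Union>(cycles E))"

lemma Union_cactus_blocks: "\<Union>(cactus_blocks E) = E"
  unfolding cactus_blocks_def using cycles_subset by blast

lemma finite_cactus_blocks: "finite E \<Longrightarrow> finite (cactus_blocks E)"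
  unfolding cactus_blocks_def by (simp add: finite_cycles)

lemma disjoint_cactus_blocks:
  assumes "cactus n E"
  shows "disjoint (cactus_blocks E)"
  using disjoint_cycles_cactus[OF assms] unfolding cactus_blocks_def disjoint_def by blast

definition block_vectors :: "nat set set \<Rightarrow> nat set set \<Rightarrow> (nat set \<Rightarrow> real) set" where
  "block_vectors E B = (if B \<in> cycles E then even_vectors B else binary_vectors B)"

lemma block_vectors_subset_binary_vectors: "block_vectors E B \<subseteq> binary_vectors B"
  unfolding block_vectors_def even_vectors_def by auto

lemma cut_vectors_cactus:
  assumes "cactus n E"
  shows "cut_vec E ` Pow {1..n-1} = block_prod (cactus_blocks E) (block_vectors E)"
  unfolding cut_vectors_eq_even_on_cycles[OF cactus_def[THEN iffD1, OF assms, THEN conjunct1]]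
proof (intro equalityI subsetI)
  fix x assume x: "x \<in> {x \<in> binary_vectors E. \<forall>C. is_cycle E C \<longrightarrow> even (card {e \<in> C. x e = 1})}"
  have "restrict x B \<in> block_vectors E B" if "B \<in> cactus_blocks E" for B
  proof -
    have "B \<subseteq> E" using that Union_cactus_blocks by blast
    then have "restrict x B \<in> binary_vectors B" using x by (auto simp: binary_vectors_def)
    moreover have "{e \<in> B. restrict x B e = 1} = {e \<in> B. x e = 1}" by auto
    ultimately show ?thesis using x by (auto simp: block_vectors_def even_vectors_def cycles_def)
  qed
  then show "x \<in> block_prod (cactus_blocks E) (block_vectors E)"
    using x unfolding block_prod_def Union_cactus_blocks binary_vectors_def by blast
next
  fix x assume x: "x \<in> block_prod (cactus_blocks E) (block_vectors E)"
  then have blocks: "restrict x B \<in> block_vectors E B" if "B \<in> cactus_blocks E" for B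
    using that unfolding block_prod_def by blast
  have "x e = 0 \<or> x e = 1" if "e \<in> E" for e
  proof -
    obtain B where "B \<in> cactus_blocks E" "e \<in> B" using \<open>e \<in> E\<close> Union_cactus_blocks by blast
    then show ?thesis
      using blocks block_vectors_subset_binary_vectors by (fastforce simp: binary_vectors_def)
  qed
  moreover have "even (card {e \<in> C. x e = 1})" if "is_cycle E C" for C
  proof -
    have "C \<in> cycles E" "C \<in> cactus_blocks E" using that
      by (auto simp: cycles_def cactus_blocks_def)
    then have "restrict x C \<in> even_vectors C" using blocks[of C] by (simp add: block_vectors_def)
    then have "even (card {e \<in> C. restrict x C e = 1})" unfolding even_vectors_def by blast
    moreover have "{e \<in> C. restrict x C e = 1} = {e \<in> C. x e = 1}" by auto
    ultimately show ?thesis by (simp only:)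
  qed
  moreover have "x \<in> extensional E"
    using x unfolding block_prod_def Union_cactus_blocks by blast
  ultimately show "x \<in> {x \<in> binary_vectors E. \<forall>C. is_cycle E C \<longrightarrow> even (card {e \<in> C. x e = 1})}"
    by (auto simp: binary_vectors_def)
qed

lemma enn2real_prod: "finite A \<Longrightarrow> enn2real (\<Prod>a\<in>A. f a) = (\<Prod>a\<in>A. enn2real (f a))"
  by (induction A rule: finite_induct) (simp_all add: enn2real_mult)

lemma measure_convex_combs_block_prod:
  assumes "finite BB" "disjoint BB" "finite (\<Union>BB)" "\<forall>B\<in>BB. finite (W B) \<and> W B \<subseteq> extensional B"
  shows "measure (lborel_PiM (\<Union>BB)) (convex_combs (\<Union>BB) (block_prod BB W)) =
    (\<Prod>B\<in>BB. measure (lborel_PiM B) (convex_combs B (W B)))"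
proof -
  have sets: "\<forall>B\<in>BB. finite B \<and> convex_combs B (W B) \<in> sets (lborel_PiM B)"
    using assms(3,4) by (auto intro: convex_combs_in_sets rev_finite_subset)
  show ?thesis
    unfolding convex_combs_block_prod[OF assms(1,2,4)] measure_def
      emeasure_block_prod[OF assms(1,2) sets]
    using assms(1) by (simp add: enn2real_prod)
qed

lemma cut_vol_cactus_eq_prod_blocks:
  assumes "cactus n E"
  shows "cut_vol n E =
    (\<Prod>B\<in>cactus_blocks E. measure (lborel_PiM B) (convex_combs B (block_vectors E B)))"
proof -
  have "simple_graph n E" using assms by (simp add: cactus_def)
  then have "finite E" by (rule finite_edges)
  have "finite (block_vectors E B) \<and> block_vectors E B \<subseteq> extensional B" if "B \<in> cactus_blocks E"
    for B
  proof
    have "finite B" using that Union_cactus_blocks \<open>finite E\<close> by (metis Sup_upper finite_subset)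
    then show "finite (block_vectors E B)"
      using block_vectors_subset_binary_vectors finite_binary_vectors finite_subset by blast
    show "block_vectors E B \<subseteq> extensional B"
      using block_vectors_subset_binary_vectors by (auto simp: binary_vectors_def)
  qed
  then show ?thesis
    using measure_convex_combs_block_prod[of "cactus_blocks E" "block_vectors E"] \<open>finite E\<close>
      finite_cactus_blocks disjoint_cactus_blocks[OF assms]
    unfolding cut_vol_def cut_polytope_eq_convex_combs cut_vectors_cactus[OF assms]
      Union_cactus_blocks
    by simp
qed

theorem proposition6:
  fixes n :: nat and E :: "nat set set"
  assumes "cactus n E"
    and "cycles E \<noteq> {}"
  shows "cut_vol n E = (\<Prod>C\<in>cycles E. cut_vol (card C) (cycle_graph (card C)))"
proof -
  let ?bridges = "(\<lambda>e. {e}) ` (E - \<Union>(cycles E))"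
  let ?factor = "\<lambda>B. measure (lborel_PiM B) (convex_combs B (block_vectors E B))"
  have "simple_graph n E" using assms(1) by (simp add: cactus_def)
  then have "finite E" by (rule finite_edges)
  have "cut_vol n E = prod ?factor (cycles E) * prod ?factor ?bridges"
    unfolding cut_vol_cactus_eq_prod_blocks[OF assms(1)] cactus_blocks_def
    using \<open>finite E\<close> finite_cycles by (intro prod.union_disjoint) auto
  also have "prod ?factor ?bridges = 1"
    using measure_binary_vectors_singleton by (intro prod.neutral) (auto simp: block_vectors_def)
  also have "prod ?factor (cycles E) = (\<Prod>C\<in>cycles E. cut_vol (card C) (cycle_graph (card C)))"
    using measure_even_vectors_cycle by (intro prod.cong) (auto simp: block_vectors_def cycles_def)
  finally show ?thesis by simp
qed

end
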